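(* Let $k\ge 3$ be an integer. Let $T$ be a $(k-1)^+$-branching tree in which exactly one vertex $y$ has degree $k-1$ (so every other internal vertex has degree at least $k$), and suppose $y$ has a neighbour $z$ that is not a leaf. Let $T'$ be the tree obtained from $T$ by contracting the edge $yz$, i.e., deleting $y$ and adding an edge $zx$ for every neighbour $x\ne z$ of $y$. Then $T'$ is $k^+$-branching and $b^{\{y\}}(T)\le b(T')$.
   Context: In a tree, vertices of degree $1$ are leaves and all other vertices are internal vertices; a tree is $m^+$-branching if every internal vertex has degree at least $m$. Graph burning on a graph $G$: in each round $i=1,2,\dots$ a vertex $b_i$ (a source, possibly already burned) is chosen and burned, and simultaneously every unburned neighbour of a vertex burned by the end of round $i-1$ becomes burned; burned vertices stay burned. A sequence $(b_1,\dots,b_m)$ is a burning sequence if all vertices are burned after round $m$; the burning number $b(G)$ is the minimum length of a burning sequence. Modified burning: for $U\subseteq V(G)$ and vertices $x_1,\dots,x_m$, the sequence $(U\cup\{x_1\},x_2,\dots,x_m)$ burns all vertices of $U\cup\{x_1\}$ in round $1$ and proceeds as in ordinary burning in rounds $i\ge 2$ (burning $x_i$ and spreading); it is a modified burning sequence if all vertices are burned after round $m$. $b^{U}(G)$ is the minimum length $m$ of a modified burning sequence for $G$ with the given set $U$. *)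

theory Defs
  imports Main
begin

definition sgraph :: "'a set \<Rightarrow> ('a \<Rightarrow> 'a \<Rightarrow> bool) \<Rightarrow> bool" where
  "sgraph V E \<longleftrightarrow> finite V \<and> (\<forall>u v. E u v \<longrightarrow> u \<in> V \<and> v \<in> V)
     \<and> (\<forall>u v. E u v \<longrightarrow> E v u) \<and> (\<forall>u. \<not> E u u)"

definition degree :: "'a set \<Rightarrow> ('a \<Rightarrow> 'a \<Rightarrow> bool) \<Rightarrow> 'a \<Rightarrow> nat" where
  "degree V E v = card {u \<in> V. E v u}"

definition connected_graph :: "'a set \<Rightarrow> ('a \<Rightarrow> 'a \<Rightarrow> bool) \<Rightarrow> bool" where
  "connected_graph V E \<longleftrightarrow> (\<forall>u\<in>V. \<forall>v\<in>V. E\<^sup>*\<^sup>* u v)"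

definition is_cycle :: "'a set \<Rightarrow> ('a \<Rightarrow> 'a \<Rightarrow> bool) \<Rightarrow> 'a list \<Rightarrow> bool" where
  "is_cycle V E cs \<longleftrightarrow> length cs \<ge> 3 \<and> distinct cs \<and> set cs \<subseteq> V
     \<and> (\<forall>i < length cs. E (cs ! i) (cs ! ((i + 1) mod length cs)))"

definition is_tree :: "'a set \<Rightarrow> ('a \<Rightarrow> 'a \<Rightarrow> bool) \<Rightarrow> bool" where
  "is_tree V E \<longleftrightarrow> sgraph V E \<and> V \<noteq> {} \<and> connected_graph V E \<and> (\<nexists>cs. is_cycle V E cs)"

definition branching :: "nat \<Rightarrow> 'a set \<Rightarrow> ('a \<Rightarrow> 'a \<Rightarrow> bool) \<Rightarrow> bool" where
  "branching m V E \<longleftrightarrow> (\<forall>v\<in>V. degree V E v \<noteq> 1 \<longrightarrow> degree V E v \<ge> m)"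

text \<open>Burned set after round i of the (modified) burning process with initial set U
  and sources xs = [x_1,...,x_m]: round 1 burns U \<union> {x_1}; round i \<ge> 2 spreads to
  neighbours and burns x_i.\<close>
fun burned :: "('a \<Rightarrow> 'a \<Rightarrow> bool) \<Rightarrow> 'a set \<Rightarrow> 'a list \<Rightarrow> nat \<Rightarrow> 'a set" where
  "burned E U xs 0 = {}"
| "burned E U xs (Suc i) =
     (if i = 0 then U \<union> {xs ! 0}
      else burned E U xs i \<union> {v. \<exists>u\<in>burned E U xs i. E u v} \<union> {xs ! i})"

definition mod_burning_seq :: "'a set \<Rightarrow> ('a \<Rightarrow> 'a \<Rightarrow> bool) \<Rightarrow> 'a set \<Rightarrow> 'a list \<Rightarrow> bool" where
  "mod_burning_seq V E U xs \<longleftrightarrow> length xs \<ge> 1 \<and> set xs \<subseteq> V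
     \<and> burned E U xs (length xs) = V"

definition burning_seq :: "'a set \<Rightarrow> ('a \<Rightarrow> 'a \<Rightarrow> bool) \<Rightarrow> 'a list \<Rightarrow> bool" where
  "burning_seq V E xs \<longleftrightarrow> mod_burning_seq V E {} xs"

definition burning_number :: "'a set \<Rightarrow> ('a \<Rightarrow> 'a \<Rightarrow> bool) \<Rightarrow> nat" where
  "burning_number V E = (LEAST m. \<exists>xs. length xs = m \<and> burning_seq V E xs)"

definition mod_burning_number :: "'a set \<Rightarrow> ('a \<Rightarrow> 'a \<Rightarrow> bool) \<Rightarrow> 'a set \<Rightarrow> nat" where
  "mod_burning_number V E U = (LEAST m. \<exists>xs. length xs = m \<and> mod_burning_seq V E U xs)"

definition contract_adj :: "('a \<Rightarrow> 'a \<Rightarrow> bool) \<Rightarrow> 'a \<Rightarrow> 'a \<Rightarrow> 'a \<Rightarrow> 'a \<Rightarrow> bool" where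
  "contract_adj E y z u v \<longleftrightarrow>
     (E u v \<and> u \<noteq> y \<and> v \<noteq> y) \<or> (u = z \<and> E y v \<and> v \<noteq> z) \<or> (v = z \<and> E y u \<and> u \<noteq> z)"

end

theory Submission
  imports Defs
begin

text \<open>Contracting yz changes only the degree of z, which becomes
  deg z + deg y - 2 \<ge> k because a tree has no triangles, so the neighbourhoods of y and z
  are disjoint. For the burning bound, every burning sequence of T' is a modified burning
  sequence of T with U = {y}: y burns from round 1 on, and every new edge of T' joins two
  neighbours of y in T, so whatever fire spreads in T' along a new edge reaches the same
  vertex in T through y.\<close>

definition triangle_free :: "('a \<Rightarrow> 'a \<Rightarrow> bool) \<Rightarrow> bool" where
  "triangle_free E \<longleftrightarrow> (\<forall>a b c. E a b \<longrightarrow> E b c \<longrightarrow> \<not> E c a)"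

lemma is_tree_triangle_free:
  assumes "is_tree V E"
  shows "triangle_free E"
  unfolding triangle_free_def
proof (intro allI impI notI)
  fix a b c assume edges: "E a b" "E b c" "E c a"
  have "sgraph V E" using assms by (simp add: is_tree_def)
  then have "a \<in> V" "b \<in> V" "c \<in> V" "distinct [a, b, c]"
    using edges unfolding sgraph_def by auto
  moreover have "E ([a, b, c] ! i) ([a, b, c] ! ((i + 1) mod 3))" if "i < 3" for i
  proof -
    from that consider "i = 0" | "i = 1" | "i = 2" by linarith
    then show ?thesis by cases (use edges in simp_all)
  qed
  ultimately have "is_cycle V E [a, b, c]"
    unfolding is_cycle_def by simp
  then show False using assms by (simp add: is_tree_def)
qed

lemma sgraph_contract_adj:
  assumes "sgraph V E" "E y z"
  shows "sgraph (V - {y}) (contract_adj E y z)"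
  using assms unfolding sgraph_def contract_adj_def by blast

lemma degree_contract_adj_center:
  assumes "sgraph V E" "triangle_free E" "E y z"
  shows "degree (V - {y}) (contract_adj E y z) z = (degree V E z - 1) + (degree V E y - 1)"
proof -
  have fin: "finite V" and sym: "E z y" and "y \<noteq> z" "y \<in> V" "z \<in> V"
    using assms unfolding sgraph_def by blast+
  have nbrs: "{u \<in> V - {y}. contract_adj E y z z u}
      = ({u \<in> V. E z u} - {y}) \<union> ({u \<in> V. E y u} - {z})"
    using assms(1) \<open>y \<noteq> z\<close> unfolding contract_adj_def sgraph_def by auto
  have "({u \<in> V. E z u} - {y}) \<inter> ({u \<in> V. E y u} - {z}) = {}"
    using assms(1,2) sym unfolding triangle_free_def sgraph_def by blast
  with fin have "card (({u \<in> V. E z u} - {y}) \<union> ({u \<in> V. E y u} - {z}))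
      = card ({u \<in> V. E z u} - {y}) + card ({u \<in> V. E y u} - {z})"
    by (simp add: card_Un_disjoint)
  then show ?thesis
    using assms(3) sym \<open>y \<in> V\<close> \<open>z \<in> V\<close>
    unfolding degree_def nbrs by (simp add: card_Diff_singleton)
qed

lemma degree_contract_adj_other:
  assumes "sgraph V E" "triangle_free E" "E y z" "v \<noteq> y" "v \<noteq> z"
  shows "degree (V - {y}) (contract_adj E y z) v = degree V E v"
proof (cases "E y v")
  case True
  have fin: "finite V" and "y \<in> V" "z \<in> V" "y \<noteq> z" and "E v y"
    using assms(1,3) True unfolding sgraph_def by blast+
  have "\<not> E v z"
    using assms(1-3) True unfolding triangle_free_def sgraph_def by blast
  have "{u \<in> V - {y}. contract_adj E y z v u} = insert z ({u \<in> V. E v u} - {y})"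
    using assms(1,4,5) True \<open>z \<in> V\<close> \<open>y \<noteq> z\<close> unfolding contract_adj_def sgraph_def by auto
  moreover have "card {u \<in> V. E v u} > 0"
    using fin \<open>E v y\<close> \<open>y \<in> V\<close> by (auto simp: card_gt_0_iff)
  ultimately show ?thesis
    using fin \<open>\<not> E v z\<close> \<open>E v y\<close> \<open>y \<in> V\<close>
    by (simp add: degree_def card_Diff_singleton)
next
  case False
  then have "{u \<in> V - {y}. contract_adj E y z v u} = {u \<in> V. E v u}"
    using assms(1,4,5) unfolding contract_adj_def sgraph_def by auto
  then show ?thesis by (simp add: degree_def)
qed

lemma branching_contract_adj:
  assumes "sgraph V E" "triangle_free E" "E y z"
    and "degree V E y \<ge> 2" "degree V E z \<noteq> 1"
    and "\<forall>v\<in>V. v \<noteq> y \<longrightarrow> degree V E v \<noteq> 1 \<longrightarrow> degree V E v \<ge> k"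
  shows "branching k (V - {y}) (contract_adj E y z)"
  unfolding branching_def
proof (intro ballI impI)
  fix v assume v: "v \<in> V - {y}"
    and internal: "degree (V - {y}) (contract_adj E y z) v \<noteq> 1"
  have "z \<in> V" "z \<noteq> y" using assms(1,3) unfolding sgraph_def by blast+
  show "degree (V - {y}) (contract_adj E y z) v \<ge> k"
  proof (cases "v = z")
    case True
    have "degree V E z \<ge> k" using assms(5,6) \<open>z \<in> V\<close> \<open>z \<noteq> y\<close> by blast
    with assms(4) show ?thesis
      unfolding True degree_contract_adj_center[OF assms(1-3)] by linarith
  next
    case False
    then show ?thesis
      using v internal assms(6) degree_contract_adj_other[OF assms(1-3)] by auto
  qed
qed

lemma burned_mono:
  assumes "i \<le> j"
  shows "burned E U xs i \<subseteq> burned E U xs j"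
  using assms
proof (induction j)
  case (Suc j)
  have "burned E U xs j \<subseteq> burned E U xs (Suc j)" by (cases j) auto
  with Suc show ?case by (auto simp: le_Suc_eq)
qed simp

lemma source_in_burned: "i < n \<Longrightarrow> xs ! i \<in> burned E U xs n"
  using burned_mono[of "Suc i" n E U xs] by auto

lemma initial_subset_burned: "1 \<le> i \<Longrightarrow> U \<subseteq> burned E U xs i"
  using burned_mono[of 1 i E U xs] by auto

lemma burned_subset:
  assumes "U \<subseteq> V" "set xs \<subseteq> V" "\<And>u v. E u v \<Longrightarrow> v \<in> V" "i \<le> length xs"
  shows "burned E U xs i \<subseteq> V"
  using assms(4)
proof (induction i)
  case (Suc i)
  then have "xs ! i \<in> V" using assms(2) by auto
  with Suc assms(1,3) show ?case by auto
qed simp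

lemma burning_seq_exists:
  assumes "sgraph V E" "V \<noteq> {}"
  shows "\<exists>xs. burning_seq V E xs"
proof -
  obtain xs where xs: "set xs = V" using assms(1) finite_list unfolding sgraph_def by blast
  have "V \<subseteq> burned E {} xs (length xs)"
    using source_in_burned by (metis xs in_set_conv_nth subsetI)
  moreover have "burned E {} xs (length xs) \<subseteq> V"
    using assms(1) xs by (intro burned_subset) (auto simp: sgraph_def)
  moreover have "xs \<noteq> []" using xs assms(2) by auto
  ultimately have "burning_seq V E xs"
    using xs by (auto simp: burning_seq_def mod_burning_seq_def Suc_le_eq)
  then show ?thesis ..
qed

lemma burning_number_obtains:
  assumes "sgraph V E" "V \<noteq> {}"
  obtains xs where "length xs = burning_number V E" "burning_seq V E xs"
  using LeastI_ex[of "\<lambda>m. \<exists>xs. length xs = m \<and> burning_seq V E xs"]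
    burning_seq_exists[OF assms] that
  unfolding burning_number_def by blast

lemma mod_burning_number_le:
  "mod_burning_seq V E U xs \<Longrightarrow> mod_burning_number V E U \<le> length xs"
  unfolding mod_burning_number_def by (intro Least_le) blast

lemma burned_contract_adj_subset:
  assumes "E y z" "1 \<le> i"
  shows "burned (contract_adj E y z) {} xs i \<subseteq> burned E {y} xs i"
  using assms(2)
proof (induction i)
  case (Suc i)
  show ?case
  proof (cases "i = 0")
    case False
    then have IH: "burned (contract_adj E y z) {} xs i \<subseteq> burned E {y} xs i"
      and "y \<in> burned E {y} xs i"
      using Suc initial_subset_burned[of i "{y}" E xs] by auto
    have "v \<in> burned E {y} xs i \<union> {v. \<exists>u\<in>burned E {y} xs i. E u v}"
      if "u \<in> burned (contract_adj E y z) {} xs i" "contract_adj E y z u v" for u v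
      using that IH \<open>y \<in> burned E {y} xs i\<close> assms(1) unfolding contract_adj_def by blast
    with IH False show ?thesis by auto
  qed simp
qed simp

lemma mod_burning_seq_of_contract_adj:
  assumes "sgraph V E" "E y z" "burning_seq (V - {y}) (contract_adj E y z) xs"
  shows "mod_burning_seq V E {y} xs"
proof -
  have len: "1 \<le> length xs" and xsV: "set xs \<subseteq> V - {y}"
    and burnt: "burned (contract_adj E y z) {} xs (length xs) = V - {y}"
    using assms(3) by (auto simp: burning_seq_def mod_burning_seq_def)
  have "y \<in> V" using assms(1,2) unfolding sgraph_def by blast
  have "burned E {y} xs (length xs) \<subseteq> V"
    using assms(1) \<open>y \<in> V\<close> xsV by (intro burned_subset) (auto simp: sgraph_def)
  moreover have "V \<subseteq> burned E {y} xs (length xs)"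
    using burned_contract_adj_subset[of E y z, OF assms(2) len] burnt
      initial_subset_burned[OF len, of "{y}" E xs] by blast
  ultimately show ?thesis
    using len xsV by (auto simp: mod_burning_seq_def)
qed

theorem mainTheorem4:
  fixes V :: "'a set" and E :: "'a \<Rightarrow> 'a \<Rightarrow> bool" and k :: nat and y z :: 'a
  assumes "k \<ge> 3"
    and "is_tree V E"
    and "branching (k - 1) V E"
    and "y \<in> V" and "degree V E y = k - 1"
    and "\<forall>v\<in>V. v \<noteq> y \<longrightarrow> degree V E v \<noteq> 1 \<longrightarrow> degree V E v \<ge> k"
    and "E y z" and "degree V E z \<noteq> 1"
  shows "branching k (V - {y}) (contract_adj E y z)
    \<and> mod_burning_number V E {y} \<le> burning_number (V - {y}) (contract_adj E y z)"
proof
  have sg: "sgraph V E" using assms(2) by (simp add: is_tree_def)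
  have tf: "triangle_free E" using assms(2) by (rule is_tree_triangle_free)
  show "branching k (V - {y}) (contract_adj E y z)"
    using branching_contract_adj[OF sg tf assms(7)] assms(1,5,6,8) by simp
  have "z \<in> V - {y}" using sg assms(7) unfolding sgraph_def by blast
  then obtain xs where "length xs = burning_number (V - {y}) (contract_adj E y z)"
    and "burning_seq (V - {y}) (contract_adj E y z) xs"
    using burning_number_obtains[OF sgraph_contract_adj[OF sg assms(7)]] by blast
  then show "mod_burning_number V E {y} \<le> burning_number (V - {y}) (contract_adj E y z)"
    using mod_burning_number_le mod_burning_seq_of_contract_adj[OF sg assms(7)] by metis
qed

end
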